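(* Let $n\geq2$, $\Omega\subset\mathbb{C}^n$ a domain, $q\in\partial\Omega$, and assume there is a neighborhood $V$ of $q$ on which $\partial\Omega$ is strictly pseudoconvex of class $\mathcal{C}^k$, $k\geq\max(2n+9,3n+6)$, and that $\Omega$ carries a complete Kähler-Einstein metric with real-analytic potential $w'$ satisfying $\det(w'_{i\bar j})=e^{(n+1)w'}$ on $\Omega$, $w'=+\infty$ on $\partial\Omega$. Let $U,\varphi,(\varphi^{(l)})_{1\le l\le n+1}$ be as in the Setting below, fix $1\leq l\leq n+1$, and set on $\Omega\cap U$: $w:=-\log(-\varphi^{(l)})$, $F:=\log J(-\varphi^{(l)})$. Then $\dfrac{|\nabla F|^2_w}{(-\varphi)^{2l-1}}\in\mathcal{C}^{k-2l-3}(\overline{\Omega\cap U})$. In particular there exists $c_\nabla>0$ with $|\nabla F|^2_w\leq c_\nabla(-\varphi)^{2l-1}$ on $\Omega\cap U$.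
   Context: Fefferman functional: $J(\psi)=(-1)^n\det\begin{pmatrix}\psi&(\psi_{\bar j})\\{}^t(\psi_i)&(\psi_{i\bar j})\end{pmatrix}$. Setting: $U$ is a bounded domain containing $q$, $\varphi$ is a $\mathcal{C}^k$ strictly plurisubharmonic defining function of $\partial\Omega$ on a neighborhood of $\overline U$ with $\inf_{\overline U}|\nabla\varphi|>0$, and for each $1\le l\le n+1$: $\varphi^{(l)}\in\mathcal{C}^{k-2l}(\overline U)$; $\Omega\cap\overline U=\{\varphi^{(l)}<0\}\cap\overline U$; $\inf_{\overline U}|\nabla\varphi^{(l)}|>0$; $\varphi^{(l)}$ strictly plurisubharmonic on $\overline U$; $|1-J(-\varphi^{(l)})|\le\frac12$ on $\overline U$; $(J(-\varphi^{(l)})-1)/(-\varphi)^l\in\mathcal{C}^{k-2l-2}(\overline U)$; $\varphi^{(l)}/\varphi\in\mathcal{C}^{k-2l}(\overline U)$ and positive; $\log J(-\varphi^{(l)})/(-\varphi)^l\in\mathcal{C}^{k-2l-2}(\overline U)$. (Such data exist, obtained by Fefferman's iteration.) $|\nabla F|^2_w=w^{i\bar j}F_iF_{\bar j}$ with $(w^{i\bar j})=(w_{i\bar j})^{-1}$. "$w'=+\infty$ on $\partial\Omega$" means $w'\to+\infty$ at $\partial\Omega$. *)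

theory Defs
  imports "HOL-Analysis.Analysis"
begin

fun dd :: "('a::real_normed_vector) list \<Rightarrow> ('a \<Rightarrow> 'b::real_normed_vector) \<Rightarrow> 'a \<Rightarrow> 'b" where
  "dd [] f = f"
| "dd (v # vs) f = (\<lambda>x. frechet_derivative (dd vs f) (at x) v)"

fun Ck_on :: "nat \<Rightarrow> ('a::real_normed_vector) set \<Rightarrow> ('a \<Rightarrow> 'b::real_normed_vector) \<Rightarrow> bool" where
  "Ck_on 0 S f = continuous_on S f"
| "Ck_on (Suc m) S f = (f differentiable_on S \<and> (\<forall>v. Ck_on m S (\<lambda>x. frechet_derivative f (at x) v)))"

text \<open>C^m(closure A) for open A: C^m on A, and every derivative of order at most m
  extends continuously to closure A (i.e. has a limit at every point of closure A).\<close>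
definition Ck_cl :: "nat \<Rightarrow> ('a::real_normed_vector) set \<Rightarrow> ('a \<Rightarrow> 'b::real_normed_vector) \<Rightarrow> bool" where
  "Ck_cl m A f \<longleftrightarrow> Ck_on m A f \<and>
     (\<forall>vs. length vs \<le> m \<longrightarrow> (\<forall>x\<in>closure A. \<exists>L. (dd vs f \<longlongrightarrow> L) (at x within A)))"

definition on_cl :: "('a::topological_space) set \<Rightarrow> ('a \<Rightarrow> 'b::t2_space) \<Rightarrow> 'a \<Rightarrow> 'b" where
  "on_cl A g x = Lim (at x within A) g"

definition pd :: "'a::real_normed_vector \<Rightarrow> ('a \<Rightarrow> 'b::real_normed_vector) \<Rightarrow> 'a \<Rightarrow> 'b" where
  "pd v f x = frechet_derivative f (at x) v"

definition cplx :: "('a \<Rightarrow> real) \<Rightarrow> 'a \<Rightarrow> complex" where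
  "cplx f = (\<lambda>x. complex_of_real (f x))"

definition dz :: "'n::finite \<Rightarrow> (complex^'n \<Rightarrow> complex) \<Rightarrow> complex^'n \<Rightarrow> complex" where
  "dz j g x = (pd (axis j 1) g x - \<i> * pd (axis j \<i>) g x) / 2"

definition dzb :: "'n::finite \<Rightarrow> (complex^'n \<Rightarrow> complex) \<Rightarrow> complex^'n \<Rightarrow> complex" where
  "dzb j g x = (pd (axis j 1) g x + \<i> * pd (axis j \<i>) g x) / 2"

definition rz :: "(complex^'n::finite \<Rightarrow> real) \<Rightarrow> 'n \<Rightarrow> complex^'n \<Rightarrow> complex" where
  "rz f j x = dz j (cplx f) x"

definition rzb :: "(complex^'n::finite \<Rightarrow> real) \<Rightarrow> 'n \<Rightarrow> complex^'n \<Rightarrow> complex" where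
  "rzb f j x = dzb j (cplx f) x"

definition rH :: "(complex^'n::finite \<Rightarrow> real) \<Rightarrow> complex^'n \<Rightarrow> 'n \<Rightarrow> 'n \<Rightarrow> complex" where
  "rH f x i j = dz i (\<lambda>y. dzb j (cplx f) y) x"

definition cHess :: "(complex^'n::finite \<Rightarrow> real) \<Rightarrow> complex^'n \<Rightarrow> complex^'n^'n" where
  "cHess f x = (\<chi> i j. rH f x i j)"

definition rgrad :: "(complex^'n::finite \<Rightarrow> real) \<Rightarrow> complex^'n \<Rightarrow> real" where
  "rgrad f x = sqrt (\<Sum>j\<in>UNIV. (pd (axis j 1) f x)\<^sup>2 + (pd (axis j \<i>) f x)\<^sup>2)"

definition spsh_on :: "(complex^'n::finite) set \<Rightarrow> (complex^'n \<Rightarrow> real) \<Rightarrow> bool" where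
  "spsh_on S f \<longleftrightarrow> (\<forall>x\<in>S. \<forall>\<xi>::complex^'n. \<xi> \<noteq> 0 \<longrightarrow>
      Re (\<Sum>i\<in>UNIV. \<Sum>j\<in>UNIV. rH f x i j * \<xi>$i * cnj (\<xi>$j)) > 0)"

definition spsh_cl :: "(complex^'n::finite) set \<Rightarrow> (complex^'n \<Rightarrow> real) \<Rightarrow> bool" where
  "spsh_cl A f \<longleftrightarrow> (\<forall>x\<in>closure A. \<forall>\<xi>::complex^'n. \<xi> \<noteq> 0 \<longrightarrow>
      Re (\<Sum>i\<in>UNIV. \<Sum>j\<in>UNIV. on_cl A (\<lambda>y. rH f y i j) x * \<xi>$i * cnj (\<xi>$j)) > 0)"

text \<open>Fefferman functional J(psi) = (-1)^n det [[psi, (psi_{bar j})], [(psi_i), (psi_{i bar j})]].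
  Row/column index None is the extra (0-th) index. For real psi the matrix is Hermitian,
  so the determinant is real; we take its real part.\<close>
definition fefJ :: "(complex^'n::finite \<Rightarrow> real) \<Rightarrow> complex^'n \<Rightarrow> real" where
  "fefJ \<psi> x = Re ((-1) ^ CARD('n) * det ((\<chi> a b. (case a of
        None \<Rightarrow> (case b of None \<Rightarrow> complex_of_real (\<psi> x) | Some j \<Rightarrow> rzb \<psi> j x)
      | Some i \<Rightarrow> (case b of None \<Rightarrow> rz \<psi> i x | Some j \<Rightarrow> rH \<psi> x i j))) :: complex^'n option^'n option))"

definition gradw :: "(complex^'n::finite \<Rightarrow> real) \<Rightarrow> (complex^'n \<Rightarrow> real) \<Rightarrow> complex^'n \<Rightarrow> real" where
  "gradw w F x = Re (\<Sum>i\<in>UNIV. \<Sum>j\<in>UNIV. matrix_inv (cHess w x) $ i $ j * rz F i x * rzb F j x)"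

definition rc :: "'n \<times> bool \<Rightarrow> complex^'n \<Rightarrow> real" where
  "rc c z = (if snd c then Im (z $ fst c) else Re (z $ fst c))"

definition real_analytic_on :: "(complex^'n::finite) set \<Rightarrow> (complex^'n \<Rightarrow> real) \<Rightarrow> bool" where
  "real_analytic_on S f \<longleftrightarrow> (\<forall>x\<in>S. \<exists>r>0. \<exists>a :: ('n \<times> bool \<Rightarrow> nat) \<Rightarrow> real.
      \<forall>y\<in>ball x r. ((\<lambda>\<alpha>. a \<alpha> * (\<Prod>c\<in>UNIV. rc c (y - x) ^ \<alpha> c)) has_sum f y) UNIV)"

definition klen :: "(complex^'n::finite \<Rightarrow> real) \<Rightarrow> (real \<Rightarrow> complex^'n) \<Rightarrow> real" where
  "klen w \<gamma> = integral {0..1} (\<lambda>t. sqrt (Re (\<Sum>i\<in>UNIV. \<Sum>j\<in>UNIV.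
      rH w (\<gamma> t) i j * vector_derivative \<gamma> (at t) $ i * cnj (vector_derivative \<gamma> (at t) $ j))))"

definition kdist :: "(complex^'n::finite \<Rightarrow> real) \<Rightarrow> (complex^'n) set \<Rightarrow> complex^'n \<Rightarrow> complex^'n \<Rightarrow> real" where
  "kdist w S x y = Inf (klen w ` {\<gamma>. \<gamma> C1_differentiable_on {0..1} \<and> path_image \<gamma> \<subseteq> S
                                     \<and> pathstart \<gamma> = x \<and> pathfinish \<gamma> = y})"

definition complete_kaehler :: "(complex^'n::finite) set \<Rightarrow> (complex^'n \<Rightarrow> real) \<Rightarrow> bool" where
  "complete_kaehler S w \<longleftrightarrow> spsh_on S w \<and> Ck_on 2 S w \<and>
     (\<forall>X. (\<forall>m. X m \<in> S) \<and> (\<forall>e>0. \<exists>N. \<forall>m\<ge>N. \<forall>p\<ge>N. kdist w S (X m) (X p) < e)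
          \<longrightarrow> (\<exists>L\<in>S. (\<lambda>m. kdist w S (X m) L) \<longlonglongrightarrow> 0))"

end

(* Put \<psi> = \<phi>s l and w = -log(-\<psi>). The complex Hessian w_{i\bar j} = \<psi>_{i\bar j}/(-\<psi>) + \<psi>_i \<psi>_{\bar j}/\<psi>^2
   is a rank-one perturbation, so Sherman-Morrison gives w^{i\bar j} explicitly in terms of \<psi>^{i\bar j}, \<partial>\<psi>,
   -\<psi> and 1/(|\<partial>\<psi>|^2_\<psi> - \<psi>). With F = G1 (-\<phi>)^l and -\<psi> = G2 (-\<phi>) one gets F_i = (-\<phi>)^{l-1} V_i, hence
   |\<nabla>F|^2_w = (-\<phi>)^{2l-1} Q, where Q is built by sums, products and quotients from C^{k-2l-3}
   functions on closure (\<Omega> \<inter> U). Both denominators stay away from zero up to the boundary: the extended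
   Hessian of \<psi> is positive definite, and |\<partial>\<psi>|^2_\<psi> - \<psi> has positive real part because \<partial>\<psi> \<noteq> 0 and
   -\<psi> \<ge> 0 there. So Q is C^{k-2l-3} up to the boundary and, the closure being compact, bounded. *)

theory Submission
  imports Defs
begin

definition extends_to_closure :: "('a::topological_space) set \<Rightarrow> ('a \<Rightarrow> 'b::topological_space) \<Rightarrow> bool" where
  "extends_to_closure A f \<longleftrightarrow> (\<forall>x\<in>closure A. \<exists>L. (f \<longlongrightarrow> L) (at x within A))"

lemma dd_snoc: "dd (vs @ [v]) f = dd vs (\<lambda>x. frechet_derivative f (at x) v)"
  by (induction vs) auto

lemma Ck_cl_0_iff: "Ck_cl 0 A f \<longleftrightarrow> continuous_on A f \<and> extends_to_closure A f"
  by (auto simp: Ck_cl_def extends_to_closure_def)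

lemma Ck_cl_Suc_iff:
  "Ck_cl (Suc m) A f \<longleftrightarrow> extends_to_closure A f \<and> f differentiable_on A \<and>
     (\<forall>v. Ck_cl m A (\<lambda>x. frechet_derivative f (at x) v))"
proof -
  have "(\<forall>vs. length vs \<le> Suc m \<longrightarrow> P vs) \<longleftrightarrow> P [] \<and> (\<forall>v vs. length vs \<le> m \<longrightarrow> P (vs @ [v]))"
    for P :: "'a list \<Rightarrow> bool"
    by (metis (no_types) le0 length_append_singleton list.size(3) not_less_eq_eq rev_exhaust)
  then show ?thesis
    unfolding Ck_cl_def extends_to_closure_def by (auto simp: dd_snoc)
qed

lemma Ck_cl_Suc_imp: "Ck_cl (Suc m) A f \<Longrightarrow> Ck_cl m A f"
proof (induction m arbitrary: f)
  case 0
  then show ?case by (simp add: Ck_cl_Suc_iff Ck_cl_0_iff differentiable_imp_continuous_on)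
next
  case (Suc m)
  then show ?case unfolding Ck_cl_Suc_iff[of m] Ck_cl_Suc_iff[of "Suc m"] by blast
qed

lemma Ck_cl_mono: "m \<le> m' \<Longrightarrow> Ck_cl m' A f \<Longrightarrow> Ck_cl m A f"
  by (induction m' rule: dec_induct) (use Ck_cl_Suc_imp in auto)

lemma Ck_cl_imp_extends_to_closure: "Ck_cl m A f \<Longrightarrow> extends_to_closure A f"
  using Ck_cl_mono[of 0 m] Ck_cl_0_iff by blast

lemma Ck_cl_imp_continuous_on: "Ck_cl m A f \<Longrightarrow> continuous_on A f"
  using Ck_cl_mono[of 0 m] Ck_cl_0_iff by blast

lemma tendsto_within_cong:
  assumes "(f \<longlongrightarrow> L) (at x within A)" "\<And>y. y \<in> A \<Longrightarrow> f y = g y"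
  shows "(g \<longlongrightarrow> L) (at x within A)"
proof (rule Lim_transform_eventually[OF assms(1)])
  show "eventually (\<lambda>y. f y = g y) (at x within A)"
    using assms(2) by (auto simp: eventually_at_filter)
qed

lemma extends_to_closure_cong:
  assumes "\<And>x. x \<in> A \<Longrightarrow> f x = g x" "extends_to_closure A f"
  shows "extends_to_closure A g"
proof -
  have "\<exists>L. (g \<longlongrightarrow> L) (at x within A)" if "x \<in> closure A" for x
  proof -
    have "\<exists>L. (f \<longlongrightarrow> L) (at x within A)"
      using assms(2) that unfolding extends_to_closure_def by (rule bspec)
    then obtain L where "(f \<longlongrightarrow> L) (at x within A)" ..
    then have "(g \<longlongrightarrow> L) (at x within A)"
      using assms(1) by (rule tendsto_within_cong)
    then show ?thesis ..
  qed
  then show ?thesis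
    unfolding extends_to_closure_def by blast
qed

lemma extends_to_closure_subset:
  "B \<subseteq> A \<Longrightarrow> extends_to_closure A f \<Longrightarrow> extends_to_closure B f"
  unfolding extends_to_closure_def by (meson closure_mono subsetD tendsto_within_subset)

lemma Ck_cl_cong:
  assumes A: "open A" and fg: "\<And>x. x \<in> A \<Longrightarrow> f x = g x" and f: "Ck_cl m A f"
  shows "Ck_cl m A g"
  using fg f
proof (induction m arbitrary: f g)
  case 0
  then show ?case
    unfolding Ck_cl_0_iff using continuous_on_cong extends_to_closure_cong by metis
next
  case (Suc m)
  have f: "extends_to_closure A f" "f differentiable_on A"
    "\<And>v. Ck_cl m A (\<lambda>x. frechet_derivative f (at x) v)"
    using Suc.prems(2) unfolding Ck_cl_Suc_iff by auto
  have fd: "(f has_derivative frechet_derivative f (at x)) (at x)" if "x \<in> A" for x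
    using f(2) A that by (simp add: differentiable_on_eq_differentiable_at frechet_derivative_works)
  have gd: "(g has_derivative frechet_derivative f (at x)) (at x)" if "x \<in> A" for x
    by (rule has_derivative_transform_within_open[OF fd[OF that] A that]) (use Suc.prems(1) in blast)
  have "g differentiable_on A"
    using gd by (meson differentiable_at_withinI differentiable_def differentiable_on_def)
  moreover have "Ck_cl m A (\<lambda>x. frechet_derivative g (at x) v)" for v
    by (rule Suc.IH[OF _ f(3)[of v]]) (metis gd fd frechet_derivative_at)
  ultimately show ?case
    using extends_to_closure_cong[OF Suc.prems(1) f(1)] unfolding Ck_cl_Suc_iff by blast
qed

lemma Ck_cl_SucI:
  assumes A: "open A" and f: "extends_to_closure A f"
    and D: "\<And>x. x \<in> A \<Longrightarrow> (f has_derivative D x) (at x)"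
    and Dm: "\<And>v. Ck_cl m A (\<lambda>x. D x v)"
  shows "Ck_cl (Suc m) A f"
proof -
  have "f differentiable_on A"
    using D by (meson differentiable_at_withinI differentiable_def differentiable_on_def)
  moreover have "Ck_cl m A (\<lambda>x. frechet_derivative f (at x) v)" for v
    by (rule Ck_cl_cong[OF A _ Dm[of v]]) (metis D frechet_derivative_at)
  ultimately show ?thesis using f unfolding Ck_cl_Suc_iff by blast
qed

lemma Ck_cl_SucD:
  assumes A: "open A" and f: "Ck_cl (Suc m) A f"
  shows "extends_to_closure A f"
    and "\<And>x. x \<in> A \<Longrightarrow> (f has_derivative frechet_derivative f (at x)) (at x)"
    and "\<And>v. Ck_cl m A (\<lambda>x. frechet_derivative f (at x) v)"
  using f A unfolding Ck_cl_Suc_iff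
  by (auto simp: differentiable_on_eq_differentiable_at frechet_derivative_works)

lemma Ck_cl_subset: "B \<subseteq> A \<Longrightarrow> Ck_cl m A f \<Longrightarrow> Ck_cl m B f"
proof (induction m arbitrary: f)
  case 0
  then show ?case
    unfolding Ck_cl_0_iff using continuous_on_subset extends_to_closure_subset by blast
next
  case (Suc m)
  then show ?case
    unfolding Ck_cl_Suc_iff using differentiable_on_subset extends_to_closure_subset by blast
qed

lemma continuous_on_imp_extends_to_closure:
  fixes f :: "'a::t2_space \<Rightarrow> 'b::topological_space"
  assumes "open N" "closure A \<subseteq> N" "continuous_on N f"
  shows "extends_to_closure A f"
proof -
  have "isCont f x" if "x \<in> closure A" for x
    using assms that continuous_on_eq_continuous_at by blast
  then show ?thesis
    unfolding extends_to_closure_def by (meson continuous_at_imp_continuous_at_within continuous_within)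
qed

lemma Ck_on_imp_Ck_cl:
  assumes N: "open N" "closure A \<subseteq> N" and f: "Ck_on m N f"
  shows "Ck_cl m A f"
  using f
proof (induction m arbitrary: f)
  case 0
  have "A \<subseteq> N" using N(2) closure_subset by blast
  with 0 show ?case
    using continuous_on_imp_extends_to_closure[OF N] continuous_on_subset
    unfolding Ck_cl_0_iff by auto
next
  case (Suc m)
  have "A \<subseteq> N" using N(2) closure_subset by blast
  moreover have "f differentiable_on N" using Suc.prems by simp
  ultimately show ?case
    using Suc continuous_on_imp_extends_to_closure[OF N differentiable_imp_continuous_on]
      differentiable_on_subset[of f N A]
    unfolding Ck_cl_Suc_iff by auto
qed

lemma tendsto_on_cl:
  fixes f :: "'a::topological_space \<Rightarrow> 'b::t2_space"
  assumes "x \<in> closure A" "extends_to_closure A f"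
  shows "(f \<longlongrightarrow> on_cl A f x) (at x within A)"
proof (cases "at x within A = bot")
  case False
  obtain L where "(f \<longlongrightarrow> L) (at x within A)"
    using assms unfolding extends_to_closure_def by blast
  with False show ?thesis
    unfolding on_cl_def by (simp add: tendsto_Lim)
qed simp

lemma on_cl_eqI:
  fixes f :: "'a::topological_space \<Rightarrow> 'b::t2_space"
  assumes "at x within A \<noteq> bot" "(f \<longlongrightarrow> L) (at x within A)"
  shows "on_cl A f x = L"
  using assms unfolding on_cl_def by (simp add: tendsto_Lim)

lemma at_within_open_closure_neq_bot:
  fixes x :: "'a::perfect_space"
  assumes "open A" "x \<in> closure A"
  shows "at x within A \<noteq> bot"
proof (cases "x \<in> A")
  case True
  then show ?thesis using assms(1) at_within_open[of x A] by simp
next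
  case False
  then have "x islimpt A" using assms(2) unfolding closure_def by blast
  then show ?thesis using trivial_limit_within by blast
qed

lemma on_cl_eq:
  fixes f :: "'a::perfect_space \<Rightarrow> 'b::t2_space"
  assumes "open A" "x \<in> A" "continuous_on A f"
  shows "on_cl A f x = f x"
proof (rule on_cl_eqI)
  show "at x within A \<noteq> bot"
    using assms(1,2) at_within_open[of x A] by simp
  show "(f \<longlongrightarrow> f x) (at x within A)"
    using assms(2,3) unfolding continuous_on_def by blast
qed

lemma on_cl_nonzero_imp_nonzero:
  fixes g :: "'a::perfect_space \<Rightarrow> 'b::{t2_space,zero}"
  assumes "open A" "continuous_on A g" "\<And>x. x \<in> closure A \<Longrightarrow> on_cl A g x \<noteq> 0" "x \<in> A"
  shows "g x \<noteq> 0"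
proof -
  have "x \<in> closure A"
    using assms(4) closure_subset by blast
  then show ?thesis
    using assms(3) on_cl_eq[OF assms(1,4,2)] by metis
qed

lemma extends_to_closure_bounded_linear:
  "bounded_linear L \<Longrightarrow> extends_to_closure A f \<Longrightarrow> extends_to_closure A (\<lambda>x. L (f x))"
  unfolding extends_to_closure_def using bounded_linear.tendsto by blast

lemma extends_to_closure_add:
  fixes f g :: "'a::topological_space \<Rightarrow> 'b::topological_monoid_add"
  shows "extends_to_closure A f \<Longrightarrow> extends_to_closure A g \<Longrightarrow> extends_to_closure A (\<lambda>x. f x + g x)"
  unfolding extends_to_closure_def using tendsto_add by blast

lemma extends_to_closure_mult:
  fixes f g :: "'a::topological_space \<Rightarrow> 'b::real_normed_algebra"
  shows "extends_to_closure A f \<Longrightarrow> extends_to_closure A g \<Longrightarrow> extends_to_closure A (\<lambda>x. f x * g x)"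
  unfolding extends_to_closure_def using tendsto_mult by blast

lemma extends_to_closure_inverse:
  fixes g :: "'a::topological_space \<Rightarrow> 'b::real_normed_div_algebra"
  assumes "extends_to_closure A g" "\<And>x. x \<in> closure A \<Longrightarrow> on_cl A g x \<noteq> 0"
  shows "extends_to_closure A (\<lambda>x. inverse (g x))"
  using assms tendsto_on_cl tendsto_inverse unfolding extends_to_closure_def by metis

lemma Ck_cl_const: "open A \<Longrightarrow> Ck_cl m A (\<lambda>x. c)"
proof (induction m arbitrary: c)
  case 0
  then show ?case by (auto simp: Ck_cl_0_iff extends_to_closure_def)
next
  case (Suc m)
  show ?case
    by (rule Ck_cl_SucI[OF Suc.prems _ has_derivative_const Suc.IH[OF Suc.prems]])
       (auto simp: extends_to_closure_def)
qed

lemma Ck_cl_bounded_linear: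
  assumes L: "bounded_linear L" and A: "open A"
  shows "Ck_cl m A f \<Longrightarrow> Ck_cl m A (\<lambda>x. L (f x))"
proof (induction m arbitrary: f)
  case 0
  then show ?case
    unfolding Ck_cl_0_iff
    using bounded_linear.continuous_on[OF L] extends_to_closure_bounded_linear[OF L] by blast
next
  case (Suc m)
  note f = Ck_cl_SucD[OF A Suc.prems]
  show ?case
    by (rule Ck_cl_SucI[OF A extends_to_closure_bounded_linear[OF L f(1)]
          bounded_linear.has_derivative[OF L f(2)] Suc.IH[OF f(3)]])
qed

lemma Ck_cl_add:
  assumes A: "open A"
  shows "Ck_cl m A f \<Longrightarrow> Ck_cl m A g \<Longrightarrow> Ck_cl m A (\<lambda>x. f x + g x)"
proof (induction m arbitrary: f g)
  case 0
  then show ?case unfolding Ck_cl_0_iff using continuous_on_add extends_to_closure_add by blast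
next
  case (Suc m)
  note f = Ck_cl_SucD[OF A Suc.prems(1)] and g = Ck_cl_SucD[OF A Suc.prems(2)]
  show ?case
    by (rule Ck_cl_SucI[OF A extends_to_closure_add[OF f(1) g(1)]
          has_derivative_add[OF f(2) g(2)] Suc.IH[OF f(3) g(3)]])
qed

lemma Ck_cl_mult:
  fixes f g :: "'a::real_normed_vector \<Rightarrow> 'b::real_normed_algebra"
  assumes A: "open A"
  shows "Ck_cl m A f \<Longrightarrow> Ck_cl m A g \<Longrightarrow> Ck_cl m A (\<lambda>x. f x * g x)"
proof (induction m arbitrary: f g)
  case 0
  then show ?case unfolding Ck_cl_0_iff using continuous_on_mult extends_to_closure_mult by blast
next
  case (Suc m)
  note f = Ck_cl_SucD[OF A Suc.prems(1)] and g = Ck_cl_SucD[OF A Suc.prems(2)]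
  note f' = Ck_cl_Suc_imp[OF Suc.prems(1)] and g' = Ck_cl_Suc_imp[OF Suc.prems(2)]
  show ?case
    by (rule Ck_cl_SucI[OF A extends_to_closure_mult[OF f(1) g(1)] has_derivative_mult[OF f(2) g(2)]
          Ck_cl_add[OF A Suc.IH[OF f' g(3)] Suc.IH[OF f(3) g']]])
qed

lemma Ck_cl_minus: "open A \<Longrightarrow> Ck_cl m A f \<Longrightarrow> Ck_cl m A (\<lambda>x. - f x)"
  by (rule Ck_cl_bounded_linear[OF bounded_linear_minus[OF bounded_linear_ident]])

lemma Ck_cl_diff: "open A \<Longrightarrow> Ck_cl m A f \<Longrightarrow> Ck_cl m A g \<Longrightarrow> Ck_cl m A (\<lambda>x. f x - g x)"
  using Ck_cl_add[of A m f "\<lambda>x. - g x"] Ck_cl_minus[of A m g] by simp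

lemma Ck_cl_inverse:
  fixes g :: "'a::{real_normed_vector,perfect_space} \<Rightarrow> 'b::real_normed_field"
  assumes A: "open A" and nz: "\<And>x. x \<in> closure A \<Longrightarrow> on_cl A g x \<noteq> 0"
  shows "Ck_cl m A g \<Longrightarrow> Ck_cl m A (\<lambda>x. inverse (g x))"
proof (induction m)
  case 0
  have "g x \<noteq> 0" if "x \<in> A" for x
    using on_cl_nonzero_imp_nonzero[OF A _ nz that] 0 unfolding Ck_cl_0_iff by blast
  with 0 show ?case
    unfolding Ck_cl_0_iff using continuous_on_inverse extends_to_closure_inverse nz by blast
next
  case (Suc m)
  note g = Ck_cl_SucD[OF A Suc.prems] and g' = Ck_cl_Suc_imp[OF Suc.prems]
  have "g x \<noteq> 0" if "x \<in> A" for x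
    by (rule on_cl_nonzero_imp_nonzero[OF A Ck_cl_imp_continuous_on[OF g'] nz that])
  then show ?case
    by (intro Ck_cl_SucI[OF A extends_to_closure_inverse[OF g(1) nz] Deriv.has_derivative_inverse[OF _ g(2)]]
        Ck_cl_minus[OF A, OF Ck_cl_mult[OF A, OF Ck_cl_mult[OF A Suc.IH[OF g'] g(3)] Suc.IH[OF g']]])
qed

lemma Ck_cl_divide:
  fixes f g :: "'a::{real_normed_vector,perfect_space} \<Rightarrow> 'b::real_normed_field"
  assumes "open A" "\<And>x. x \<in> closure A \<Longrightarrow> on_cl A g x \<noteq> 0" "Ck_cl m A f" "Ck_cl m A g"
  shows "Ck_cl m A (\<lambda>x. f x / g x)"
  unfolding divide_inverse using assms by (simp add: Ck_cl_mult Ck_cl_inverse)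

lemma Ck_cl_sum:
  assumes "open A" "\<And>i. i \<in> S \<Longrightarrow> Ck_cl m A (f i)"
  shows "Ck_cl m A (\<lambda>x. \<Sum>i\<in>S. f i x)"
  using assms(2)
proof (induction S rule: infinite_finite_induct)
  case (insert i S)
  then show ?case using Ck_cl_add[OF assms(1), of m "f i"] by simp
qed (simp_all add: Ck_cl_const assms(1))

lemma Ck_cl_prod:
  fixes f :: "'i \<Rightarrow> 'a::real_normed_vector \<Rightarrow> 'b::real_normed_field"
  assumes "open A" "\<And>i. i \<in> S \<Longrightarrow> Ck_cl m A (f i)"
  shows "Ck_cl m A (\<lambda>x. \<Prod>i\<in>S. f i x)"
  using assms(2)
proof (induction S rule: infinite_finite_induct)
  case (insert i S)
  then show ?case using Ck_cl_mult[OF assms(1), of m "f i"] by simp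
qed (simp_all add: Ck_cl_const assms(1))

lemma Ck_cl_of_real: "open A \<Longrightarrow> Ck_cl m A f \<Longrightarrow> Ck_cl m A (\<lambda>x. of_real (f x) :: 'b::real_normed_algebra_1)"
  by (rule Ck_cl_bounded_linear[OF bounded_linear_of_real])

lemma Ck_cl_Re: "open A \<Longrightarrow> Ck_cl m A f \<Longrightarrow> Ck_cl m A (\<lambda>x. Re (f x))"
  by (rule Ck_cl_bounded_linear[OF bounded_linear_Re])

lemma Ck_cl_dz:
  assumes A: "open A" and g: "Ck_cl (Suc m) A g"
  shows "Ck_cl m A (dz j g)" "Ck_cl m A (dzb j g)"
proof -
  have "Ck_cl m A (pd v g)" for v
    using Ck_cl_SucD(3)[OF A g] unfolding pd_def[abs_def] .
  then have "Ck_cl m A (\<lambda>x. (pd (axis j 1) g x + c * pd (axis j \<i>) g x) / 2)" for c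
    unfolding divide_inverse using A by (intro Ck_cl_mult Ck_cl_add Ck_cl_const)
  from this[of "- \<i>"] this[of \<i>] show "Ck_cl m A (dz j g)" "Ck_cl m A (dzb j g)"
    unfolding dz_def[abs_def] dzb_def[abs_def] by simp_all
qed

lemma Ck_cl_rz:
  assumes "open A" "Ck_cl (Suc m) A f"
  shows "Ck_cl m A (rz f i)" "Ck_cl m A (rzb f i)"
  using Ck_cl_dz[OF assms(1) Ck_cl_of_real[OF assms]]
  unfolding rz_def[abs_def] rzb_def[abs_def] cplx_def by simp_all

lemma Ck_cl_rH:
  assumes "open A" "Ck_cl (Suc (Suc m)) A f"
  shows "Ck_cl m A (\<lambda>y. rH f y i j)"
  using Ck_cl_dz(1)[OF assms(1) Ck_cl_rz(2)[OF assms]]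
  unfolding rH_def[abs_def] rzb_def[abs_def] by simp

lemma Ck_cl_det:
  fixes M :: "'a::real_normed_vector \<Rightarrow> 'b::real_normed_field^'n::finite^'n"
  assumes "open A" "\<And>i j. Ck_cl m A (\<lambda>y. M y $ i $ j)"
  shows "Ck_cl m A (\<lambda>y. det (M y))"
  unfolding det_def using assms
  by (intro Ck_cl_sum Ck_cl_mult Ck_cl_const Ck_cl_prod) auto

lemma extends_to_closure_bounded:
  fixes f :: "'a::metric_space \<Rightarrow> 'b::real_normed_vector"
  assumes A: "compact (closure A)" and f: "extends_to_closure A f"
  shows "\<exists>M. \<forall>y\<in>A. norm (f y) \<le> M"
proof -
  have "\<exists>d>0. \<exists>B. \<forall>y\<in>A. dist y x < d \<longrightarrow> norm (f y) \<le> B" if "x \<in> closure A" for x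
  proof -
    have "\<exists>L. (f \<longlongrightarrow> L) (at x within A)"
      using f that unfolding extends_to_closure_def by (rule bspec)
    then obtain L d where d: "d > 0" "\<And>y. y \<in> A \<Longrightarrow> 0 < dist y x \<Longrightarrow> dist y x < d \<Longrightarrow> dist (f y) L < 1"
      unfolding Lim_within by (meson zero_less_one)
    have "norm (f y) \<le> max (norm L + 1) (norm (f x))" if "y \<in> A" "dist y x < d" for y
    proof (cases "y = x")
      case False
      then have "dist (f y) L < 1" using d(2) that by simp
      then have "norm (f y) \<le> norm L + 1"
        using norm_triangle_ineq2[of "f y" L] by (simp add: dist_norm)
      then show ?thesis by linarith
    qed simp
    with d(1) show ?thesis by blast
  qed
  then obtain d B where dB: "\<And>x. x \<in> closure A \<Longrightarrow> d x > 0"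
    "\<And>x y. x \<in> closure A \<Longrightarrow> y \<in> A \<Longrightarrow> dist y x < d x \<Longrightarrow> norm (f y) \<le> B x"
    by metis
  have "closure A \<subseteq> (\<Union>x\<in>closure A. ball x (d x))"
    using dB(1) by force
  then obtain T where T: "T \<subseteq> closure A" "finite T" "closure A \<subseteq> (\<Union>x\<in>T. ball x (d x))"
    using compactE_image[OF A, of "closure A" "\<lambda>x. ball x (d x)"] by blast
  have "norm (f y) \<le> (\<Sum>x\<in>T. \<bar>B x\<bar>)" if y: "y \<in> A" for y
  proof -
    have "y \<in> closure A" using y closure_subset by blast
    then obtain x where x: "x \<in> T" "dist x y < d x"
      using T(3) by auto
    then have "norm (f y) \<le> B x"
      using dB(2)[of x y] T(1) y by (auto simp: dist_commute)
    also have "\<dots> \<le> (\<Sum>x\<in>T. \<bar>B x\<bar>)"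
      using member_le_sum[OF x(1), of "\<lambda>x. \<bar>B x\<bar>"] T(2) by simp
    finally show ?thesis .
  qed
  then show ?thesis by blast
qed

lemma matrix_inv_unique:
  fixes A M :: "'a::field^'n::finite^'n"
  assumes AM: "A ** M = mat 1"
  shows "matrix_inv A = M"
proof -
  have "A ** M = mat 1 \<and> M ** A = mat 1"
    using AM matrix_left_right_inverse by blast
  then have "matrix_inv A ** A = mat 1"
    unfolding matrix_inv_def by (rule someI2) blast
  have "matrix_inv A = (matrix_inv A ** A) ** M"
    by (metis AM matrix_mul_assoc matrix_mul_rid)
  also have "\<dots> = M"
    using \<open>matrix_inv A ** A = mat 1\<close> by (simp add: matrix_mul_lid)
  finally show ?thesis .
qed

lemma matrix_inv_cramer:
  fixes A :: "'a::field^'n::finite^'n"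
  assumes "det A \<noteq> 0"
  shows "matrix_inv A $ k $ j = det (\<chi> p q. if q = k then axis j 1 $ p else A $ p $ q) / det A"
proof -
  define M where "M = (\<chi> k j. det (\<chi> p q. if q = k then axis j 1 $ p else A $ p $ q) / det A)"
  have "A *v column j M = axis j 1" for j
    using cramer[OF assms] by (simp add: M_def column_def)
  then have "A ** M = mat 1"
    by (simp add: vec_eq_iff matrix_matrix_mult_def matrix_vector_mult_def column_def
        mat_def axis_def)
  then show ?thesis
    unfolding matrix_inv_unique[OF \<open>A ** M = mat 1\<close>] by (simp add: M_def)
qed

lemma matrix_inv_right:
  fixes A :: "'a::field^'n::finite^'n"
  assumes "det A \<noteq> 0"
  shows "A ** matrix_inv A = mat 1"
  using assms matrix_inv_unique unfolding invertible_det_nz[symmetric] invertible_def by metis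

lemma tendsto_det:
  fixes M :: "'a \<Rightarrow> 'b::real_normed_field^'n::finite^'n"
  assumes "\<And>i j. ((\<lambda>y. M y $ i $ j) \<longlongrightarrow> L $ i $ j) F"
  shows "((\<lambda>y. det (M y)) \<longlongrightarrow> det L) F"
  unfolding det_def by (intro tendsto_sum tendsto_mult tendsto_const tendsto_prod assms)

lemma tendsto_matrix_inv:
  fixes M :: "'a \<Rightarrow> 'b::real_normed_field^'n::finite^'n"
  assumes M: "\<And>i j. ((\<lambda>y. M y $ i $ j) \<longlongrightarrow> L $ i $ j) F" and L: "det L \<noteq> 0"
  shows "((\<lambda>y. matrix_inv (M y) $ k $ j) \<longlongrightarrow> matrix_inv L $ k $ j) F"
proof -
  let ?C = "\<lambda>A :: 'b^'n^'n. (\<chi> p q. if q = k then axis j 1 $ p else A $ p $ q)"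
  have det: "((\<lambda>y. det (M y)) \<longlongrightarrow> det L) F"
    by (rule tendsto_det[OF M])
  have "((\<lambda>y. det (?C (M y)) / det (M y)) \<longlongrightarrow> det (?C L) / det L) F"
    using M by (intro tendsto_divide det L tendsto_det) simp
  moreover have "eventually (\<lambda>y. det (?C (M y)) / det (M y) = matrix_inv (M y) $ k $ j) F"
    using tendsto_imp_eventually_ne[OF det L] by eventually_elim (simp add: matrix_inv_cramer)
  ultimately have "((\<lambda>y. matrix_inv (M y) $ k $ j) \<longlongrightarrow> det (?C L) / det L) F"
    by (rule Lim_transform_eventually)
  then show ?thesis
    by (simp add: matrix_inv_cramer[OF L])
qed

lemma Ck_cl_matrix_inv:
  fixes M :: "'a::{real_normed_vector,perfect_space} \<Rightarrow> 'b::real_normed_field^'n::finite^'n"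
  assumes A: "open A" and M: "\<And>i j. Ck_cl m A (\<lambda>y. M y $ i $ j)"
    and nz: "\<And>x. x \<in> closure A \<Longrightarrow> on_cl A (\<lambda>y. det (M y)) x \<noteq> 0"
  shows "Ck_cl m A (\<lambda>y. matrix_inv (M y) $ k $ j)"
proof (rule Ck_cl_cong[OF A])
  have det: "Ck_cl m A (\<lambda>y. det (M y))"
    by (rule Ck_cl_det[OF A M])
  show "det (\<chi> p q. if q = k then axis j 1 $ p else M y $ p $ q) / det (M y) = matrix_inv (M y) $ k $ j"
    if "y \<in> A" for y
  proof -
    have "det (M y) \<noteq> 0"
      by (rule on_cl_nonzero_imp_nonzero[OF A Ck_cl_imp_continuous_on[OF det] nz that])
    then show ?thesis by (simp add: matrix_inv_cramer)
  qed
  have "Ck_cl m A (\<lambda>y. (\<chi> p q. if q = k then axis j 1 $ p else M y $ p $ q) $ p $ q)" for p q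
    by (cases "q = k") (simp_all add: Ck_cl_const[OF A] M)
  then show "Ck_cl m A (\<lambda>y. det (\<chi> p q. if q = k then axis j 1 $ p else M y $ p $ q) / det (M y))"
    by (intro Ck_cl_divide[OF A nz] Ck_cl_det[OF A] det)
qed

definition pos_def_form :: "complex^'n::finite^'n \<Rightarrow> bool" where
  "pos_def_form H \<longleftrightarrow> (\<forall>\<xi>. \<xi> \<noteq> 0 \<longrightarrow> 0 < Re (\<Sum>i\<in>UNIV. \<Sum>j\<in>UNIV. H $ i $ j * \<xi> $ i * cnj (\<xi> $ j)))"

lemma pos_def_form_mult_vec:
  assumes "pos_def_form H" "y \<noteq> 0"
  shows "0 < Re (\<Sum>i\<in>UNIV. cnj (y $ i) * (H *v y) $ i)"
proof -
  define \<xi> where "\<xi> = (\<chi> i. cnj (y $ i))"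
  have "\<xi> \<noteq> 0"
    using assms(2) unfolding \<xi>_def by (simp add: vec_eq_iff)
  then have "0 < Re (\<Sum>i\<in>UNIV. \<Sum>j\<in>UNIV. H $ i $ j * \<xi> $ i * cnj (\<xi> $ j))"
    using assms(1) unfolding pos_def_form_def by blast
  also have "(\<Sum>i\<in>UNIV. \<Sum>j\<in>UNIV. H $ i $ j * \<xi> $ i * cnj (\<xi> $ j))
      = (\<Sum>i\<in>UNIV. cnj (y $ i) * (H *v y) $ i)"
    unfolding \<xi>_def matrix_vector_mult_def by (simp add: sum_distrib_left mult_ac)
  finally show ?thesis .
qed

lemma pos_def_form_det_nonzero:
  assumes "pos_def_form H"
  shows "det H \<noteq> 0"
proof -
  have "y = 0" if "H *v y = 0" for y
    using pos_def_form_mult_vec[OF assms, of y] that by (cases "y = 0") auto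
  then show ?thesis
    using matrix_left_invertible_ker invertible_det_nz invertible_left_inverse by blast
qed

lemma pos_def_form_matrix_inv:
  assumes H: "pos_def_form H" and a: "a \<noteq> 0"
  shows "0 < Re (\<Sum>q\<in>UNIV. \<Sum>p\<in>UNIV. cnj (a $ q) * matrix_inv H $ q $ p * a $ p)"
proof -
  define y where "y = matrix_inv H *v a"
  have Hy: "H *v y = a"
    unfolding y_def using matrix_inv_right[OF pos_def_form_det_nonzero[OF H]]
    by (simp add: matrix_vector_mul_assoc)
  moreover have "y \<noteq> 0"
    using Hy a by auto
  ultimately have "0 < Re (\<Sum>i\<in>UNIV. cnj (y $ i) * a $ i)"
    using pos_def_form_mult_vec[OF H] by blast
  also have "(\<Sum>i\<in>UNIV. cnj (y $ i) * a $ i) = cnj (\<Sum>i\<in>UNIV. y $ i * cnj (a $ i))"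
    by simp
  also have "Re (cnj (\<Sum>i\<in>UNIV. y $ i * cnj (a $ i))) = Re (\<Sum>i\<in>UNIV. y $ i * cnj (a $ i))"
    by simp
  also have "(\<Sum>i\<in>UNIV. y $ i * cnj (a $ i)) = (\<Sum>q\<in>UNIV. \<Sum>p\<in>UNIV. cnj (a $ q) * matrix_inv H $ q $ p * a $ p)"
    unfolding y_def matrix_vector_mult_def by (simp add: sum_distrib_left sum_distrib_right mult_ac)
  finally show ?thesis .
qed

lemma sherman_morrison:
  fixes H :: "'a::field^'n::finite^'n" and a b :: "'a^'n"
  defines "Hi \<equiv> matrix_inv H"
  defines "\<beta> \<equiv> (\<Sum>q\<in>UNIV. \<Sum>p\<in>UNIV. b $ q * Hi $ q $ p * a $ p)"
  assumes H: "det H \<noteq> 0" and h: "h \<noteq> 0" and D: "\<beta> + h \<noteq> 0"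
  shows "matrix_inv (\<chi> i j. H $ i $ j / h + a $ i * b $ j / h\<^sup>2) =
    (\<chi> i j. h * (Hi $ i $ j - (\<Sum>p\<in>UNIV. Hi $ i $ p * a $ p) * (\<Sum>q\<in>UNIV. b $ q * Hi $ q $ j) / (\<beta> + h)))"
proof (rule matrix_inv_unique)
  define D where "D = \<beta> + h"
  have D0: "D \<noteq> 0" and \<beta>: "\<beta> = D - h"
    using D unfolding D_def by simp_all
  define u where "u k = (\<Sum>p\<in>UNIV. Hi $ k $ p * a $ p)" for k
  define v where "v j = (\<Sum>q\<in>UNIV. b $ q * Hi $ q $ j)" for j
  have HHi: "(\<Sum>k\<in>UNIV. H $ i $ k * Hi $ k $ j) = (if i = j then 1 else 0)" for i j
  proof -
    have "(H ** Hi) $ i $ j = (\<Sum>k\<in>UNIV. H $ i $ k * Hi $ k $ j)"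
      by (simp add: matrix_matrix_mult_def)
    then show ?thesis
      using matrix_inv_right[OF H] unfolding Hi_def by (simp add: mat_def)
  qed
  have Hu: "(\<Sum>k\<in>UNIV. H $ i $ k * u k) = a $ i" for i
  proof -
    have "(\<Sum>k\<in>UNIV. H $ i $ k * u k) = (\<Sum>k\<in>UNIV. \<Sum>p\<in>UNIV. H $ i $ k * Hi $ k $ p * a $ p)"
      unfolding u_def by (simp add: sum_distrib_left mult.assoc)
    also have "\<dots> = (\<Sum>p\<in>UNIV. \<Sum>k\<in>UNIV. H $ i $ k * Hi $ k $ p * a $ p)"
      by (rule sum.swap)
    also have "\<dots> = (\<Sum>p\<in>UNIV. (\<Sum>k\<in>UNIV. H $ i $ k * Hi $ k $ p) * a $ p)"
      by (simp add: sum_distrib_right)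
    also have "\<dots> = (\<Sum>p\<in>UNIV. if i = p then a $ p else 0)"
      by (rule sum.cong) (simp_all add: HHi)
    finally show ?thesis by simp
  qed
  have bu: "(\<Sum>k\<in>UNIV. b $ k * u k) = \<beta>"
    unfolding u_def \<beta>_def by (simp add: sum_distrib_left mult.assoc)
  have entry: "(\<Sum>k\<in>UNIV. (H $ i $ k / h + a $ i * b $ k / h\<^sup>2) * (h * (Hi $ k $ j - u k * v j / D)))
      = (if i = j then 1 else 0)" for i j
  proof -
    have pt: "(H $ i $ k / h + a $ i * b $ k / h\<^sup>2) * (h * (Hi $ k $ j - u k * v j / D)) =
        H $ i $ k * Hi $ k $ j - H $ i $ k * u k * (v j / D)
        + (a $ i / h) * (b $ k * Hi $ k $ j) - (a $ i / h) * (v j / D) * (b $ k * u k)" for k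
      using h D0 by (simp add: field_simps power2_eq_square)
    have "(\<Sum>k\<in>UNIV. (H $ i $ k / h + a $ i * b $ k / h\<^sup>2) * (h * (Hi $ k $ j - u k * v j / D)))
        = (\<Sum>k\<in>UNIV. H $ i $ k * Hi $ k $ j) - (\<Sum>k\<in>UNIV. H $ i $ k * u k) * (v j / D)
          + (a $ i / h) * (\<Sum>k\<in>UNIV. b $ k * Hi $ k $ j) - (a $ i / h) * (v j / D) * (\<Sum>k\<in>UNIV. b $ k * u k)"
      unfolding pt by (simp add: sum.distrib sum_subtractf sum_distrib_left sum_distrib_right sum_divide_distrib)
    also have "\<dots> = (if i = j then 1 else 0) - a $ i * (v j / D) + (a $ i / h) * v j - (a $ i / h) * (v j / D) * \<beta>"
      unfolding HHi Hu bu v_def ..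
    also have "\<dots> = (if i = j then 1 else 0)"
      using h D0 unfolding \<beta> by (cases "i = j") (simp_all add: field_simps)
    finally show ?thesis .
  qed
  show "(\<chi> i j. H $ i $ j / h + a $ i * b $ j / h\<^sup>2) **
      (\<chi> i j. h * (Hi $ i $ j - (\<Sum>p\<in>UNIV. Hi $ i $ p * a $ p) * (\<Sum>q\<in>UNIV. b $ q * Hi $ q $ j) / (\<beta> + h))) = mat 1"
    using entry unfolding u_def v_def D_def by (simp add: vec_eq_iff matrix_matrix_mult_def mat_def)
qed

lemma dz_has_derivative:
  assumes "(g has_derivative g') (at y)"
  shows "dz j g y = (g' (axis j 1) - \<i> * g' (axis j \<i>)) / 2"
    and "dzb j g y = (g' (axis j 1) + \<i> * g' (axis j \<i>)) / 2"
  using frechet_derivative_at[OF assms] unfolding dz_def dzb_def pd_def by simp_all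

lemma rz_has_derivative:
  fixes r :: "complex^'n::finite \<Rightarrow> real"
  assumes "(r has_derivative r') (at y)"
  shows "rz r j y = (of_real (r' (axis j 1)) - \<i> * of_real (r' (axis j \<i>))) / 2"
    and "rzb r j y = (of_real (r' (axis j 1)) + \<i> * of_real (r' (axis j \<i>))) / 2"
proof -
  have "(cplx r has_derivative (\<lambda>v. of_real (r' v))) (at y)"
    unfolding cplx_def by (rule bounded_linear.has_derivative[OF bounded_linear_of_real assms])
  from dz_has_derivative[OF this]
  show "rz r j y = (of_real (r' (axis j 1)) - \<i> * of_real (r' (axis j \<i>))) / 2"
    and "rzb r j y = (of_real (r' (axis j 1)) + \<i> * of_real (r' (axis j \<i>))) / 2"
    unfolding rz_def rzb_def by simp_all
qed

lemma rzb_eq_cnj_rz: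
  fixes r :: "complex^'n::finite \<Rightarrow> real"
  assumes "(r has_derivative r') (at y)"
  shows "rzb r j y = cnj (rz r j y)"
  unfolding rz_has_derivative[OF assms] by (simp add: complex_eq_iff)

lemma rgrad_eq_rz:
  fixes r :: "complex^'n::finite \<Rightarrow> real"
  assumes "(r has_derivative r') (at y)"
  shows "rgrad r y = 2 * sqrt (\<Sum>j\<in>UNIV. (cmod (rz r j y))\<^sup>2)"
proof -
  have "(r' (axis j 1))\<^sup>2 + (r' (axis j \<i>))\<^sup>2 = 2\<^sup>2 * (cmod (rz r j y))\<^sup>2" for j
    unfolding rz_has_derivative[OF assms] cmod_power2 by (simp add: power2_eq_square field_simps)
  then have "rgrad r y = sqrt (2\<^sup>2 * (\<Sum>j\<in>UNIV. (cmod (rz r j y))\<^sup>2))"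
    using frechet_derivative_at[OF assms] unfolding rgrad_def pd_def by (simp add: sum_distrib_left)
  then show ?thesis
    by (simp add: real_sqrt_mult)
qed

lemma has_derivative_log_potential:
  fixes r :: "'a::real_normed_vector \<Rightarrow> real"
  assumes "(r has_derivative r') (at y)" "r y < 0"
  shows "((\<lambda>y. - ln (- r y)) has_derivative (\<lambda>v. r' v / (- r y))) (at y)"
  using has_derivative_minus[OF has_derivative_ln[OF _ has_derivative_minus[OF assms(1)]]] assms(2)
  by (simp add: divide_inverse)

lemma rzb_log_potential:
  fixes r :: "complex^'n::finite \<Rightarrow> real"
  assumes "(r has_derivative r') (at y)" "r y < 0"
  shows "rzb (\<lambda>y. - ln (- r y)) j y = rzb r j y / of_real (- r y)"
  unfolding rz_has_derivative(2)[OF has_derivative_log_potential[OF assms]] rz_has_derivative(2)[OF assms(1)]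
  using assms(2) by (simp add: field_simps)

lemma rH_log_potential:
  fixes r :: "complex^'n::finite \<Rightarrow> real"
  assumes B: "open B" "y \<in> B" and r: "\<And>z. z \<in> B \<Longrightarrow> r differentiable (at z)"
    and neg: "\<And>z. z \<in> B \<Longrightarrow> r z < 0" and rzb: "rzb r j differentiable (at y)"
  shows "rH (\<lambda>y. - ln (- r y)) y i j
           = rH r y i j / of_real (- r y) + rz r i y * rzb r j y / (of_real (- r y))\<^sup>2"
proof -
  define h where "h z = complex_of_real (- r z)" for z
  define h' where "h' v = complex_of_real (- frechet_derivative r (at y) v)" for v
  define b' where "b' = frechet_derivative (rzb r j) (at y)"
  have rd: "(r has_derivative frechet_derivative r (at z)) (at z)" if "z \<in> B" for z
    using r[OF that] by (rule frechet_derivative_works[THEN iffD1])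
  have hd: "(h has_derivative h') (at y)"
    unfolding h_def[abs_def] h'_def[abs_def]
    by (rule bounded_linear.has_derivative[OF bounded_linear_of_real has_derivative_minus[OF rd[OF B(2)]]])
  have hy: "h y \<noteq> 0"
    unfolding h_def using neg[OF B(2)] by simp
  have bd: "(rzb r j has_derivative b') (at y)"
    unfolding b'_def using rzb by (rule frechet_derivative_works[THEN iffD1])
  have qd: "((\<lambda>z. rzb r j z / h z) has_derivative (\<lambda>v. - rzb r j y * (inverse (h y) * h' v * inverse (h y)) + b' v / h y)) (at y)"
    by (rule has_derivative_divide[OF bd hd hy])
  have "rH (\<lambda>y. - ln (- r y)) y i j = dz i (\<lambda>z. rzb r j z / h z) y"
  proof -
    have "\<And>z. z \<in> B \<Longrightarrow> rzb r j z / h z = rzb (\<lambda>y. - ln (- r y)) j z"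
      unfolding h_def using rzb_log_potential[OF rd neg] by simp
    then have "frechet_derivative (\<lambda>z. rzb r j z / h z) (at y) = frechet_derivative (rzb (\<lambda>y. - ln (- r y)) j) (at y)"
      using frechet_derivative_transform_within_open[OF _ B(1) B(2)] qd differentiableI by blast
    then show ?thesis
      unfolding rH_def dz_def pd_def rzb_def[abs_def] by simp
  qed
  also have "\<dots> = - rzb r j y * (inverse (h y))\<^sup>2 * ((h' (axis i 1) - \<i> * h' (axis i \<i>)) / 2)
       + ((b' (axis i 1) - \<i> * b' (axis i \<i>)) / 2) / h y"
    unfolding dz_has_derivative(1)[OF qd] using hy by (simp add: field_simps power2_eq_square)
  also have "(h' (axis i 1) - \<i> * h' (axis i \<i>)) / 2 = - rz r i y"
    unfolding h'_def rz_has_derivative(1)[OF rd[OF B(2)]] by (simp add: field_simps)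
  also have "(b' (axis i 1) - \<i> * b' (axis i \<i>)) / 2 = rH r y i j"
    unfolding b'_def rH_def dz_def pd_def rzb_def[abs_def] ..
  finally show ?thesis
    unfolding h_def using hy by (simp add: field_simps power2_eq_square)
qed

lemma rz_mult_power:
  fixes F G g :: "complex^'n::finite \<Rightarrow> real"
  assumes U: "open U" "y \<in> U" and F: "\<And>z. z \<in> U \<Longrightarrow> F z = G z * g z ^ Suc k"
    and G: "(G has_derivative G') (at y)" and g: "(g has_derivative g') (at y)"
  shows "rz F i y = of_real (g y ^ k) * (of_real (g y) * rz G i y + of_nat (Suc k) * of_real (G y) * rz g i y)"
    and "rzb F i y = of_real (g y ^ k) * (of_real (g y) * rzb G i y + of_nat (Suc k) * of_real (G y) * rzb g i y)"
proof -
  define F' where "F' v = g y ^ k * (g y * G' v + real (Suc k) * G y * g' v)" for v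
  have "((\<lambda>z. G z * g z ^ Suc k) has_derivative F') (at y)"
    using has_derivative_mult[OF G has_derivative_power[OF g, of "Suc k"]]
    by (rule has_derivative_eq_rhs) (simp add: F'_def fun_eq_iff algebra_simps)
  then have Fd: "(F has_derivative F') (at y)"
    by (rule has_derivative_transform_within_open[OF _ U]) (simp add: F)
  show "rz F i y = of_real (g y ^ k) * (of_real (g y) * rz G i y + of_nat (Suc k) * of_real (G y) * rz g i y)"
    and "rzb F i y = of_real (g y ^ k) * (of_real (g y) * rzb G i y + of_nat (Suc k) * of_real (G y) * rzb g i y)"
    unfolding rz_has_derivative[OF Fd] rz_has_derivative[OF G] rz_has_derivative[OF g] F'_def
    by (simp_all add: field_simps)
qed

(* Writing r^{i\bar j} for the inverse of the complex Hessian (r_{i\bar j}), hess_grad_sq r is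
   |\<partial>r|^2_r = r^{q\bar p} r_{\bar q} r_p, and (-r) * log_potential_inv r is the inverse complex Hessian
   of -log(-r): by Sherman-Morrison, since (-log(-r))_{i\bar j} = r_{i\bar j}/(-r) + r_i r_{\bar j}/r^2. *)

definition hess_grad_sq :: "(complex^'n::finite \<Rightarrow> real) \<Rightarrow> complex^'n \<Rightarrow> complex" where
  "hess_grad_sq r y = (\<Sum>q\<in>UNIV. \<Sum>p\<in>UNIV. rzb r q y * matrix_inv (cHess r y) $ q $ p * rz r p y)"

definition log_potential_inv :: "(complex^'n::finite \<Rightarrow> real) \<Rightarrow> complex^'n \<Rightarrow> complex^'n^'n" where
  "log_potential_inv r y = (\<chi> i j. matrix_inv (cHess r y) $ i $ j
     - (\<Sum>p\<in>UNIV. matrix_inv (cHess r y) $ i $ p * rz r p y)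
       * (\<Sum>q\<in>UNIV. rzb r q y * matrix_inv (cHess r y) $ q $ j) / (hess_grad_sq r y + of_real (- r y)))"

lemma matrix_inv_cHess_log_potential:
  fixes r :: "complex^'n::finite \<Rightarrow> real"
  assumes B: "open B" "y \<in> B" and r: "\<And>z. z \<in> B \<Longrightarrow> r differentiable (at z)"
    and neg: "\<And>z. z \<in> B \<Longrightarrow> r z < 0" and rzb: "\<And>j. rzb r j differentiable (at y)"
    and det: "det (cHess r y) \<noteq> 0" and D: "hess_grad_sq r y + of_real (- r y) \<noteq> 0"
  shows "matrix_inv (cHess (\<lambda>y. - ln (- r y)) y) = (\<chi> i j. of_real (- r y) * log_potential_inv r y $ i $ j)"
proof -
  define a where "a = (\<chi> i. rz r i y)"
  define b where "b = (\<chi> i. rzb r i y)"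
  have "cHess (\<lambda>y. - ln (- r y)) y
      = (\<chi> i j. cHess r y $ i $ j / of_real (- r y) + a $ i * b $ j / (of_real (- r y))\<^sup>2)"
    using rH_log_potential[OF B r neg rzb] unfolding a_def b_def by (simp add: cHess_def)
  moreover have "hess_grad_sq r y = (\<Sum>q\<in>UNIV. \<Sum>p\<in>UNIV. b $ q * matrix_inv (cHess r y) $ q $ p * a $ p)"
    unfolding hess_grad_sq_def a_def b_def by simp
  moreover have "of_real (- r y) \<noteq> (0::complex)"
    using neg[OF B(2)] by simp
  ultimately show ?thesis
    using sherman_morrison[OF det, of "of_real (- r y)" b a] D
    unfolding log_potential_inv_def a_def b_def by simp
qed

lemma gradw_log_potential:
  fixes r :: "complex^'n::finite \<Rightarrow> real"
  assumes B: "open B" "y \<in> B" and r: "Ck_cl 2 B r" and neg: "\<And>z. z \<in> B \<Longrightarrow> r z < 0"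
    and det: "det (cHess r y) \<noteq> 0" and D: "hess_grad_sq r y + of_real (- r y) \<noteq> 0"
  shows "gradw (\<lambda>y. - ln (- r y)) F y
    = Re (of_real (- r y) * (\<Sum>i\<in>UNIV. \<Sum>j\<in>UNIV. log_potential_inv r y $ i $ j * rz F i y * rzb F j y))"
proof -
  have r2: "Ck_cl (Suc (Suc 0)) B r"
    using r by (simp add: numeral_2_eq_2)
  have "r differentiable (at z)" if "z \<in> B" for z
    using Ck_cl_SucD(2)[OF B(1) r2 that] differentiableI by blast
  moreover have "rzb r j differentiable (at y)" for j
    using Ck_cl_SucD(2)[OF B(1) Ck_cl_rz(2)[OF B(1) r2] B(2)] differentiableI by blast
  ultimately have inv: "matrix_inv (cHess (\<lambda>y. - ln (- r y)) y) = (\<chi> i j. of_real (- r y) * log_potential_inv r y $ i $ j)"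
    by (intro matrix_inv_cHess_log_potential[OF B _ neg _ det D])
  have "gradw (\<lambda>y. - ln (- r y)) F y = Re (\<Sum>i\<in>UNIV. \<Sum>j\<in>UNIV.
      of_real (- r y) * log_potential_inv r y $ i $ j * rz F i y * rzb F j y)"
    unfolding gradw_def inv by simp
  then show ?thesis
    by (simp only: sum_distrib_left mult.assoc)
qed

lemma tendsto_on_cl_subset:
  fixes f :: "'a::topological_space \<Rightarrow> 'b::t2_space"
  assumes "B \<subseteq> U" "x \<in> closure B" "extends_to_closure U f"
  shows "(f \<longlongrightarrow> on_cl U f x) (at x within B)"
proof -
  have "x \<in> closure U"
    using assms(1,2) closure_mono by blast
  then show ?thesis
    using tendsto_on_cl[OF _ assms(3)] tendsto_within_subset[OF _ assms(1)] by blast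
qed

lemma spsh_cl_pos_def_form:
  "spsh_cl U r \<Longrightarrow> x \<in> closure U \<Longrightarrow> pos_def_form (\<chi> i j. on_cl U (\<lambda>y. rH r y i j) x)"
  unfolding spsh_cl_def pos_def_form_def by simp

lemma on_cl_det_cHess_nonzero:
  fixes r :: "complex^'n::finite \<Rightarrow> real"
  assumes U: "open U" "Ck_cl 2 U r" "spsh_cl U r" and B: "open B" "B \<subseteq> U" "x \<in> closure B"
  shows "on_cl B (\<lambda>y. det (cHess r y)) x \<noteq> 0"
proof -
  define Hl where "Hl = (\<chi> i j. on_cl U (\<lambda>y. rH r y i j) x)"
  have "((\<lambda>y. cHess r y $ i $ j) \<longlongrightarrow> Hl $ i $ j) (at x within B)" for i j
    using tendsto_on_cl_subset[OF B(2,3) Ck_cl_imp_extends_to_closure[OF Ck_cl_rH[OF U(1), of 0]]] U(2)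
    by (simp add: Hl_def cHess_def numeral_2_eq_2)
  then have "on_cl B (\<lambda>y. det (cHess r y)) x = det Hl"
    by (intro on_cl_eqI at_within_open_closure_neq_bot[OF B(1,3)] tendsto_det)
  moreover have "x \<in> closure U"
    using B(2,3) closure_mono by blast
  ultimately show ?thesis
    using pos_def_form_det_nonzero[OF spsh_cl_pos_def_form[OF U(3)]] unfolding Hl_def by simp
qed

lemma on_cl_rz_neq_zero:
  fixes r :: "complex^'n::finite \<Rightarrow> real"
  assumes U: "open U" "Ck_cl 1 U r" and x: "x \<in> closure U" and grad: "0 < on_cl U (rgrad r) x"
  shows "(\<chi> j. on_cl U (rz r j) x) \<noteq> 0"
proof
  assume a0: "(\<chi> j. on_cl U (rz r j) x) = 0"
  have r1: "Ck_cl (Suc 0) U r"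
    using U(2) by simp
  have "on_cl U (rz r j) x = 0" for j
    using a0 by (simp add: vec_eq_iff)
  moreover have "((\<lambda>y. 2 * sqrt (\<Sum>j\<in>UNIV. (cmod (rz r j y))\<^sup>2))
      \<longlongrightarrow> 2 * sqrt (\<Sum>j\<in>UNIV. (cmod (on_cl U (rz r j) x))\<^sup>2)) (at x within U)"
    using tendsto_on_cl[OF x Ck_cl_imp_extends_to_closure[OF Ck_cl_rz(1)[OF U(1) r1]]]
    by (intro tendsto_intros)
  ultimately have "((\<lambda>y. 2 * sqrt (\<Sum>j\<in>UNIV. (cmod (rz r j y))\<^sup>2)) \<longlongrightarrow> 0) (at x within U)"
    by simp
  then have "(rgrad r \<longlongrightarrow> 0) (at x within U)"
    by (rule tendsto_within_cong) (simp add: rgrad_eq_rz[OF Ck_cl_SucD(2)[OF U(1) r1]])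
  then have "on_cl U (rgrad r) x = 0"
    by (rule on_cl_eqI[OF at_within_open_closure_neq_bot[OF U(1) x]])
  then show False
    using grad by simp
qed

(* At the boundary -r \<ge> 0, while hess_grad_sq r tends to |\<partial>r|^2 for the positive definite extended
   Hessian, which is positive since the gradient of r stays away from zero. *)
lemma on_cl_hess_grad_sq_nonzero:
  fixes r :: "complex^'n::finite \<Rightarrow> real"
  assumes U: "open U" "Ck_cl 2 U r" "spsh_cl U r" and grad: "\<And>x. x \<in> closure U \<Longrightarrow> 0 < on_cl U (rgrad r) x"
    and B: "open B" "B \<subseteq> U" "x \<in> closure B" and neg: "\<And>z. z \<in> B \<Longrightarrow> r z < 0"
  shows "on_cl B (\<lambda>y. hess_grad_sq r y + of_real (- r y)) x \<noteq> 0"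
proof -
  define Hl where "Hl = (\<chi> i j. on_cl U (\<lambda>y. rH r y i j) x)"
  define a where "a = (\<chi> j. on_cl U (rz r j) x)"
  have xU: "x \<in> closure U"
    using B(2,3) closure_mono by blast
  have nontriv: "at x within B \<noteq> bot"
    by (rule at_within_open_closure_neq_bot[OF B(1,3)])
  have r2: "Ck_cl (Suc (Suc 0)) U r"
    using U(2) by (simp add: numeral_2_eq_2)
  have rd: "(r has_derivative frechet_derivative r (at z)) (at z)" if "z \<in> U" for z
    using Ck_cl_SucD(2)[OF U(1) r2 that] .
  have Hpd: "pos_def_form Hl"
    unfolding Hl_def by (rule spsh_cl_pos_def_form[OF U(3) xU])
  have H: "((\<lambda>y. cHess r y $ i $ j) \<longlongrightarrow> Hl $ i $ j) (at x within B)" for i j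
    using tendsto_on_cl_subset[OF B(2,3) Ck_cl_imp_extends_to_closure[OF Ck_cl_rH[OF U(1) r2]]]
    by (simp add: Hl_def cHess_def)
  have rz_ext: "extends_to_closure U (rz r j)" for j
    using Ck_cl_imp_extends_to_closure[OF Ck_cl_rz(1)[OF U(1) r2]] .
  have A: "(rz r j \<longlongrightarrow> a $ j) (at x within B)" for j
    unfolding a_def using tendsto_on_cl_subset[OF B(2,3) rz_ext] by simp
  have "((\<lambda>y. cnj (rz r j y)) \<longlongrightarrow> cnj (a $ j)) (at x within B)" for j
    by (rule tendsto_cnj[OF A])
  then have Ab: "(rzb r j \<longlongrightarrow> cnj (a $ j)) (at x within B)" for j
    by (rule tendsto_within_cong) (use rzb_eq_cnj_rz[OF rd] B(2) in auto)
  have "a \<noteq> 0"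
    unfolding a_def by (rule on_cl_rz_neq_zero[OF U(1) Ck_cl_mono[OF _ U(2)] xU grad[OF xU]]) simp
  then have pos: "0 < Re (\<Sum>q\<in>UNIV. \<Sum>p\<in>UNIV. cnj (a $ q) * matrix_inv Hl $ q $ p * a $ p)"
    by (rule pos_def_form_matrix_inv[OF Hpd])
  have "\<exists>rl. (r \<longlongrightarrow> rl) (at x within B)"
    using extends_to_closure_subset[OF B(2) Ck_cl_imp_extends_to_closure[OF U(2)]] B(3)
    unfolding extends_to_closure_def by (rule bspec)
  then obtain rl where rl: "(r \<longlongrightarrow> rl) (at x within B)" ..
  have "eventually (\<lambda>y. 0 \<ge> r y) (at x within B)"
    unfolding eventually_at_filter by (intro always_eventually allI impI) (simp add: less_imp_le neg)
  then have "rl \<le> 0"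
    by (rule tendsto_upperbound[OF rl _ nontriv])
  have "((\<lambda>y. hess_grad_sq r y + of_real (- r y))
      \<longlongrightarrow> (\<Sum>q\<in>UNIV. \<Sum>p\<in>UNIV. cnj (a $ q) * matrix_inv Hl $ q $ p * a $ p) + of_real (- rl)) (at x within B)"
    unfolding hess_grad_sq_def
    by (intro tendsto_add tendsto_sum tendsto_mult tendsto_of_real tendsto_minus
        Ab A rl tendsto_matrix_inv[OF H pos_def_form_det_nonzero[OF Hpd]])
  then have "on_cl B (\<lambda>y. hess_grad_sq r y + of_real (- r y)) x
      = (\<Sum>q\<in>UNIV. \<Sum>p\<in>UNIV. cnj (a $ q) * matrix_inv Hl $ q $ p * a $ p) + of_real (- rl)"
    by (rule on_cl_eqI[OF nontriv])
  moreover have "0 < Re ((\<Sum>q\<in>UNIV. \<Sum>p\<in>UNIV. cnj (a $ q) * matrix_inv Hl $ q $ p * a $ p) + of_real (- rl))"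
    using pos \<open>rl \<le> 0\<close> by simp
  ultimately show ?thesis
    by (metis zero_complex.sel(1) order_less_irrefl)
qed

lemma Ck_cl_hess_grad_sq:
  fixes r :: "complex^'n::finite \<Rightarrow> real"
  assumes B: "open B" and r: "Ck_cl (Suc (Suc m)) B r"
    and det: "\<And>x. x \<in> closure B \<Longrightarrow> on_cl B (\<lambda>y. det (cHess r y)) x \<noteq> 0"
  shows "Ck_cl m B (\<lambda>y. matrix_inv (cHess r y) $ p $ q)" and "Ck_cl m B (hess_grad_sq r)"
proof -
  have "Ck_cl m B (\<lambda>y. cHess r y $ p $ q)" for p q
    using Ck_cl_rH[OF B r] by (simp add: cHess_def)
  then show Hi: "Ck_cl m B (\<lambda>y. matrix_inv (cHess r y) $ p $ q)" for p q
    by (rule Ck_cl_matrix_inv[OF B _ det])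
  have r1: "Ck_cl (Suc m) B r"
    by (rule Ck_cl_Suc_imp[OF r])
  show "Ck_cl m B (hess_grad_sq r)"
    unfolding hess_grad_sq_def[abs_def]
    by (intro Ck_cl_sum[OF B] Ck_cl_mult[OF B] Hi Ck_cl_rz[OF B r1])
qed

lemma Ck_cl_log_potential_inv:
  fixes r :: "complex^'n::finite \<Rightarrow> real"
  assumes B: "open B" and r: "Ck_cl (Suc (Suc m)) B r"
    and det: "\<And>x. x \<in> closure B \<Longrightarrow> on_cl B (\<lambda>y. det (cHess r y)) x \<noteq> 0"
    and D: "\<And>x. x \<in> closure B \<Longrightarrow> on_cl B (\<lambda>y. hess_grad_sq r y + of_real (- r y)) x \<noteq> 0"
  shows "Ck_cl m B (\<lambda>y. log_potential_inv r y $ i $ j)"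
proof -
  note Hi = Ck_cl_hess_grad_sq(1)[OF B r det]
  have r1: "Ck_cl (Suc m) B r"
    by (rule Ck_cl_Suc_imp[OF r])
  have "Ck_cl m B (\<lambda>y. hess_grad_sq r y + of_real (- r y))"
    by (rule Ck_cl_add[OF B Ck_cl_hess_grad_sq(2)[OF B r det]
          Ck_cl_of_real[OF B Ck_cl_minus[OF B Ck_cl_Suc_imp[OF r1]]]])
  then show ?thesis
    unfolding log_potential_inv_def vec_lambda_beta
    by (intro Ck_cl_diff[OF B] Ck_cl_divide[OF B D] Ck_cl_mult[OF B] Ck_cl_sum[OF B] Hi Ck_cl_rz[OF B r1])
qed

lemma log_potential_nondegenerate:
  fixes r :: "complex^'n::finite \<Rightarrow> real"
  assumes B: "open B" "y \<in> B" and r: "Ck_cl (Suc (Suc m)) B r"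
    and det: "\<And>x. x \<in> closure B \<Longrightarrow> on_cl B (\<lambda>y. det (cHess r y)) x \<noteq> 0"
    and D: "\<And>x. x \<in> closure B \<Longrightarrow> on_cl B (\<lambda>y. hess_grad_sq r y + of_real (- r y)) x \<noteq> 0"
  shows "det (cHess r y) \<noteq> 0" and "hess_grad_sq r y + of_real (- r y) \<noteq> 0"
proof -
  have "Ck_cl m B (\<lambda>y. det (cHess r y))"
    using Ck_cl_rH[OF B(1) r] by (intro Ck_cl_det[OF B(1)]) (simp add: cHess_def)
  then show "det (cHess r y) \<noteq> 0"
    by (rule on_cl_nonzero_imp_nonzero[OF B(1) Ck_cl_imp_continuous_on det B(2)])
  have "Ck_cl m B (\<lambda>y. hess_grad_sq r y + of_real (- r y))"
    by (rule Ck_cl_add[OF B(1) Ck_cl_hess_grad_sq(2)[OF B(1) r det]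
          Ck_cl_of_real[OF B(1) Ck_cl_minus[OF B(1) Ck_cl_mono[of m, OF _ r]]]]) simp_all
  then show "hess_grad_sq r y + of_real (- r y) \<noteq> 0"
    by (rule on_cl_nonzero_imp_nonzero[OF B(1) Ck_cl_imp_continuous_on D B(2)])
qed

lemma Ck_cl_gradw_log_potential_div_power:
  fixes r \<phi> G1 G2 F :: "complex^'n::finite \<Rightarrow> real"
  assumes B: "open B" and r: "Ck_cl (Suc (Suc m)) B r"
    and det: "\<And>x. x \<in> closure B \<Longrightarrow> on_cl B (\<lambda>y. det (cHess r y)) x \<noteq> 0"
    and D: "\<And>x. x \<in> closure B \<Longrightarrow> on_cl B (\<lambda>y. hess_grad_sq r y + of_real (- r y)) x \<noteq> 0"
    and \<phi>: "Ck_cl (Suc m) B \<phi>" "\<And>z. z \<in> B \<Longrightarrow> \<phi> z < 0"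
    and G2: "Ck_cl m B G2" "\<And>z. z \<in> B \<Longrightarrow> 0 < G2 z" "\<And>z. z \<in> B \<Longrightarrow> r z = G2 z * \<phi> z"
    and G1: "Ck_cl (Suc m) B G1" and F: "\<And>z. z \<in> B \<Longrightarrow> F z = G1 z * (- \<phi> z) ^ l"
    and l: "1 \<le> l"
  shows "Ck_cl m B (\<lambda>x. gradw (\<lambda>y. - ln (- r y)) F x / (- \<phi> x) ^ (2 * l - 1))"
proof -
  (* F_i = (-\<phi>)^{l-1} V_i and -r = G2 (-\<phi>), so the factor (-\<phi>)^{2l-1} splits off gradw, leaving Q. *)
  define V where "V i y = of_real (- \<phi> y) * rz G1 i y + of_nat l * of_real (G1 y) * rz (\<lambda>z. - \<phi> z) i y" for i y
  define W where "W i y = of_real (- \<phi> y) * rzb G1 i y + of_nat l * of_real (G1 y) * rzb (\<lambda>z. - \<phi> z) i y" for i y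
  define Q where "Q y = Re (of_real (G2 y) * (\<Sum>i\<in>UNIV. \<Sum>j\<in>UNIV. log_potential_inv r y $ i $ j * V i y * W j y))" for y
  have m\<phi>: "Ck_cl (Suc m) B (\<lambda>z. - \<phi> z)"
    by (rule Ck_cl_minus[OF B \<phi>(1)])
  have "Ck_cl m B (V i)" "Ck_cl m B (W i)" for i
    unfolding V_def[abs_def] W_def[abs_def]
    by (intro Ck_cl_add[OF B] Ck_cl_mult[OF B] Ck_cl_const[OF B] Ck_cl_of_real[OF B]
        Ck_cl_rz[OF B G1(1)] Ck_cl_rz[OF B m\<phi>] Ck_cl_Suc_imp[OF m\<phi>] Ck_cl_Suc_imp[OF G1(1)])+
  then have Q: "Ck_cl m B Q"
    unfolding Q_def[abs_def]
    by (intro Ck_cl_Re[OF B] Ck_cl_mult[OF B] Ck_cl_of_real[OF B] G2(1) Ck_cl_sum[OF B]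
        Ck_cl_log_potential_inv[OF B r det D])
  have "gradw (\<lambda>y. - ln (- r y)) F x / (- \<phi> x) ^ (2 * l - 1) = Q x" if x: "x \<in> B" for x
  proof -
    have r2: "Ck_cl 2 B r"
      using Ck_cl_mono[OF _ r] by simp
    have rneg: "r z < 0" if "z \<in> B" for z
      using G2(2,3)[OF that] \<phi>(2)[OF that] by (simp add: mult_pos_neg)
    have "gradw (\<lambda>y. - ln (- r y)) F x
        = Re (of_real (- r x) * (\<Sum>i\<in>UNIV. \<Sum>j\<in>UNIV. log_potential_inv r x $ i $ j * rz F i x * rzb F j x))"
      by (rule gradw_log_potential[OF B x r2 rneg log_potential_nondegenerate[OF B x r det D]])
    also have "\<dots> = Re (of_real (- r x * ((- \<phi> x) ^ (l - 1))\<^sup>2)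
        * (\<Sum>i\<in>UNIV. \<Sum>j\<in>UNIV. log_potential_inv r x $ i $ j * V i x * W j x))"
    proof -
      have Fl: "F z = G1 z * (- \<phi> z) ^ Suc (l - 1)" if "z \<in> B" for z
        using F[OF that] l by simp
      have "rz F i x = of_real ((- \<phi> x) ^ (l - 1)) * V i x" "rzb F i x = of_real ((- \<phi> x) ^ (l - 1)) * W i x" for i
        using rz_mult_power[OF B x Fl Ck_cl_SucD(2)[OF B G1 x] Ck_cl_SucD(2)[OF B m\<phi> x]] l
        unfolding V_def W_def by simp_all
      then show ?thesis
        by (simp add: sum_distrib_left sum_negf power2_eq_square mult_ac)
    qed
    also have "- r x * ((- \<phi> x) ^ (l - 1))\<^sup>2 = G2 x * (- \<phi> x) ^ (2 * l - 1)"
    proof -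
      have "2 * l - 1 = (l - 1) + (l - 1) + 1"
        using l by simp
      then have "(- \<phi> x) ^ (2 * l - 1) = (- \<phi> x) ^ (l - 1) * (- \<phi> x) ^ (l - 1) * (- \<phi> x)"
        by (simp only: power_add power_one_right)
      then show ?thesis
        unfolding G2(3)[OF x] power2_eq_square by (simp only: mult_ac mult_minus_left mult_minus_right)
    qed
    finally show ?thesis
      using \<phi>(2)[OF x] unfolding Q_def by simp
  qed
  then show ?thesis
    by (intro Ck_cl_cong[OF B _ Q]) simp
qed

lemma Ck_cl_gradw_log_potential_div_power_spsh:
  fixes r \<phi> G1 G2 F :: "complex^'n::finite \<Rightarrow> real"
  assumes U: "open U" and B: "open B" "B \<subseteq> U"
    and r: "Ck_cl (Suc (Suc m)) U r" "spsh_cl U r" "\<And>x. x \<in> closure U \<Longrightarrow> 0 < on_cl U (rgrad r) x"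
    and \<phi>: "Ck_cl (Suc m) U \<phi>" "\<And>z. z \<in> B \<Longrightarrow> \<phi> z < 0"
    and G2: "Ck_cl m U G2" "\<And>x. x \<in> closure U \<Longrightarrow> 0 < on_cl U G2 x" "\<And>z. z \<in> U \<Longrightarrow> r z = G2 z * \<phi> z"
    and G1: "Ck_cl (Suc m) U G1" and F: "\<And>z. z \<in> U \<Longrightarrow> F z = G1 z * (- \<phi> z) ^ l"
    and l: "1 \<le> l"
  shows "Ck_cl m B (\<lambda>x. gradw (\<lambda>y. - ln (- r y)) F x / (- \<phi> x) ^ (2 * l - 1))"
proof -
  have G2_pos: "0 < G2 z" if "z \<in> U" for z
  proof -
    have "0 < on_cl U G2 z"
      using G2(2) that closure_subset by blast
    then show ?thesis
      using on_cl_eq[OF U that Ck_cl_imp_continuous_on[OF G2(1)]] by simp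
  qed
  have r_neg: "r z < 0" if "z \<in> B" for z
    using G2(3) G2_pos \<phi>(2)[OF that] that B(2) by (auto simp: mult_pos_neg)
  have r2: "Ck_cl 2 U r"
    using Ck_cl_mono[OF _ r(1)] by simp
  show ?thesis
  proof (rule Ck_cl_gradw_log_potential_div_power[OF B(1)])
    show "on_cl B (\<lambda>y. det (cHess r y)) x \<noteq> 0" if "x \<in> closure B" for x
      by (rule on_cl_det_cHess_nonzero[OF U r2 r(2) B that])
    show "on_cl B (\<lambda>y. hess_grad_sq r y + of_real (- r y)) x \<noteq> 0" if "x \<in> closure B" for x
      by (rule on_cl_hess_grad_sq_nonzero[OF U r2 r(2,3) B that r_neg])
    show "Ck_cl (Suc (Suc m)) B r" "Ck_cl (Suc m) B \<phi>" "Ck_cl m B G2" "Ck_cl (Suc m) B G1"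
      by (intro Ck_cl_subset[OF B(2)] r(1) \<phi>(1) G2(1) G1)+
  qed (use \<phi>(2) G2_pos G2(3) F B(2) l in auto)
qed

lemma extends_to_closure_quotient_le:
  fixes f g :: "'a::heine_borel \<Rightarrow> real"
  assumes "bounded A" "extends_to_closure A (\<lambda>x. f x / g x)" "\<And>x. x \<in> A \<Longrightarrow> 0 < g x"
  shows "\<exists>c>0. \<forall>x\<in>A. f x \<le> c * g x"
proof -
  obtain M where M: "\<And>x. x \<in> A \<Longrightarrow> \<bar>f x / g x\<bar> \<le> M"
    using extends_to_closure_bounded[OF _ assms(2)] assms(1) compact_closure by auto
  have "f x \<le> (\<bar>M\<bar> + 1) * g x" if "x \<in> A" for x
  proof -
    have "f x / g x \<le> \<bar>M\<bar> + 1"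
      using M[OF that] by linarith
    then show ?thesis
      using assms(3)[OF that] by (simp add: divide_le_eq)
  qed
  moreover have "0 < \<bar>M\<bar> + 1"
    by simp
  ultimately show ?thesis
    by blast
qed

theorem proposition3p1:
  fixes \<Omega> U V N :: "(complex^'n::finite) set"
    and q :: "complex^'n"
    and k l :: nat
    and w' \<phi> :: "complex^'n \<Rightarrow> real"
    and \<phi>s :: "nat \<Rightarrow> complex^'n \<Rightarrow> real"
  assumes n2: "CARD('n) \<ge> 2"
    and dom: "open \<Omega>" "connected \<Omega>"
    and qb: "q \<in> frontier \<Omega>"
    and V: "open V" "q \<in> V"
    and spc: "\<exists>\<rho>. Ck_on k V \<rho> \<and> (\<forall>x\<in>V. x \<in> \<Omega> \<longleftrightarrow> \<rho> x < 0)
                 \<and> (\<forall>x\<in>V. rgrad \<rho> x > 0) \<and> spsh_on V \<rho>"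
    and kbd: "k \<ge> max (2 * CARD('n) + 9) (3 * CARD('n) + 6)"
    and KE: "complete_kaehler \<Omega> w'" "real_analytic_on \<Omega> w'"
            "\<forall>x\<in>\<Omega>. det (cHess w' x) = complex_of_real (exp (real (CARD('n) + 1) * w' x))"
            "\<forall>p\<in>frontier \<Omega>. filterlim w' at_top (at p within \<Omega>)"
    and U: "open U" "connected U" "bounded U" "q \<in> U"
    and N: "open N" "closure U \<subseteq> N"
    and phi: "Ck_on k N \<phi>" "\<forall>x\<in>N. x \<in> \<Omega> \<longleftrightarrow> \<phi> x < 0" "spsh_on N \<phi>"
             "\<exists>c>0. \<forall>x\<in>closure U. rgrad \<phi> x \<ge> c"
    and phis: "\<forall>m\<in>{1..CARD('n)+1}.
        Ck_cl (k - 2*m) U (\<phi>s m)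
      \<and> (\<forall>x\<in>closure U. x \<in> \<Omega> \<longleftrightarrow> on_cl U (\<phi>s m) x < 0)
      \<and> (\<exists>c>0. \<forall>x\<in>closure U. on_cl U (rgrad (\<phi>s m)) x \<ge> c)
      \<and> spsh_cl U (\<phi>s m)
      \<and> (\<forall>x\<in>closure U. \<bar>1 - on_cl U (fefJ (\<lambda>y. - \<phi>s m y)) x\<bar> \<le> 1/2)
      \<and> (\<exists>G. Ck_cl (k - 2*m - 2) U G \<and>
             (\<forall>x\<in>U. fefJ (\<lambda>y. - \<phi>s m y) x - 1 = G x * (- \<phi> x) ^ m))
      \<and> (\<exists>G. Ck_cl (k - 2*m) U G \<and> (\<forall>x\<in>closure U. on_cl U G x > 0) \<and>
             (\<forall>x\<in>U. \<phi>s m x = G x * \<phi> x))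
      \<and> (\<exists>G. Ck_cl (k - 2*m - 2) U G \<and>
             (\<forall>x\<in>U. ln (fefJ (\<lambda>y. - \<phi>s m y) x) = G x * (- \<phi> x) ^ m))"
    and l: "1 \<le> l" "l \<le> CARD('n) + 1"
  shows "Ck_cl (k - 2*l - 3) (\<Omega> \<inter> U)
           (\<lambda>x. gradw (\<lambda>y. - ln (- \<phi>s l y)) (\<lambda>y. ln (fefJ (\<lambda>z. - \<phi>s l z) y)) x
                 / (- \<phi> x) ^ (2*l - 1))
       \<and> (\<exists>c>0. \<forall>x\<in>\<Omega> \<inter> U.
             gradw (\<lambda>y. - ln (- \<phi>s l y)) (\<lambda>y. ln (fefJ (\<lambda>z. - \<phi>s l z) y)) x
               \<le> c * (- \<phi> x) ^ (2*l - 1))"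
proof -
  define r where "r = \<phi>s l"
  define m where "m = k - 2 * l - 3"
  have km: "k - 2 * l = Suc (Suc (Suc m))" "k - 2 * l - 2 = Suc m" "Suc m \<le> k"
    using kbd l unfolding m_def by auto
  have "l \<in> {1..CARD('n)+1}"
    using l by simp
  note P = phis[rule_format, OF this, folded r_def]
  have "Ck_cl (Suc (Suc (Suc m))) U r" "spsh_cl U r"
    using P km(1) by simp_all
  then have r: "Ck_cl (Suc (Suc m)) U r" "spsh_cl U r"
    using Ck_cl_Suc_imp by blast+
  obtain c where "0 < c" "\<forall>x\<in>closure U. c \<le> on_cl U (rgrad r) x"
    using P by blast
  then have grad: "0 < on_cl U (rgrad r) x" if "x \<in> closure U" for x
    using that by force
  obtain G1 where G1: "Ck_cl (Suc m) U G1" "\<forall>x\<in>U. ln (fefJ (\<lambda>y. - r y) x) = G1 x * (- \<phi> x) ^ l"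
    using P km(2) by auto
  obtain G2 where G2: "Ck_cl (k - 2 * l) U G2" "\<forall>x\<in>closure U. 0 < on_cl U G2 x" "\<forall>x\<in>U. r x = G2 x * \<phi> x"
    using P by blast
  have B: "open (\<Omega> \<inter> U)" "\<Omega> \<inter> U \<subseteq> U" "bounded (\<Omega> \<inter> U)"
    using dom(1) U(1,3) bounded_subset by auto
  have \<phi>_neg: "\<phi> z < 0" if "z \<in> \<Omega> \<inter> U" for z
    using that phi(2) N(2) closure_subset by blast
  have quotient: "Ck_cl m (\<Omega> \<inter> U)
      (\<lambda>x. gradw (\<lambda>y. - ln (- r y)) (\<lambda>y. ln (fefJ (\<lambda>z. - r z) y)) x / (- \<phi> x) ^ (2 * l - 1))"
    using G1 G2(2,3) l(1) Ck_cl_mono[of m, OF _ G2(1)] km(1)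
    by (intro Ck_cl_gradw_log_potential_div_power_spsh[OF U(1) B(1,2) r grad
          Ck_cl_mono[OF km(3) Ck_on_imp_Ck_cl[OF N phi(1)]] \<phi>_neg]) auto
  moreover have "\<exists>c>0. \<forall>x\<in>\<Omega> \<inter> U. gradw (\<lambda>y. - ln (- r y)) (\<lambda>y. ln (fefJ (\<lambda>z. - r z) y)) x
      \<le> c * (- \<phi> x) ^ (2 * l - 1)"
    by (rule extends_to_closure_quotient_le[OF B(3) Ck_cl_imp_extends_to_closure[OF quotient]])
       (simp add: \<phi>_neg)
  ultimately show ?thesis
    unfolding r_def m_def by (rule conjI)
qed

end
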